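(* Let $\mathfrak{g}$ be a finite-dimensional complex Lie algebra which is not perfect (i.e. $[\mathfrak{g},\mathfrak{g}]\neq\mathfrak{g}$) and has non-trivial center. Then $\mathfrak{g}$ admits a non-trivial CPA-product.
   Context: A CPA-structure (CPA-product) on a Lie algebra $\mathfrak{g}$ is a bilinear product $x\cdot y$ on $\mathfrak{g}$ satisfying, for all $x,y,z$: $x\cdot y=y\cdot x$; $[x,y]\cdot z=x\cdot(y\cdot z)-y\cdot(x\cdot z)$; $x\cdot[y,z]=[x\cdot y,z]+[y,x\cdot z]$. It is non-trivial if $x\cdot y\neq0$ for some $x,y$. *)

theory Defs
  imports Complex_Main
begin

definition bilinear_map :: "(complex \<Rightarrow> 'a::ab_group_add \<Rightarrow> 'a) \<Rightarrow> ('a \<Rightarrow> 'a \<Rightarrow> 'a) \<Rightarrow> bool" where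
  "bilinear_map sc m \<longleftrightarrow>
     (\<forall>x y z. m (x + y) z = m x z + m y z) \<and>
     (\<forall>x y z. m x (y + z) = m x y + m x z) \<and>
     (\<forall>c x y. m (sc c x) y = sc c (m x y)) \<and>
     (\<forall>c x y. m x (sc c y) = sc c (m x y))"

definition complex_lie_algebra :: "(complex \<Rightarrow> 'a::ab_group_add \<Rightarrow> 'a) \<Rightarrow> ('a \<Rightarrow> 'a \<Rightarrow> 'a) \<Rightarrow> bool" where
  "complex_lie_algebra sc br \<longleftrightarrow>
     vector_space sc \<and> bilinear_map sc br \<and>
     (\<forall>x. br x x = 0) \<and>
     (\<forall>x y z. br x (br y z) + br y (br z x) + br z (br x y) = 0)"

definition finite_dim :: "(complex \<Rightarrow> 'a::ab_group_add \<Rightarrow> 'a) \<Rightarrow> bool" where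
  "finite_dim sc \<longleftrightarrow> (\<exists>B. finite_dimensional_vector_space sc B)"

definition derived_algebra :: "(complex \<Rightarrow> 'a::ab_group_add \<Rightarrow> 'a) \<Rightarrow> ('a \<Rightarrow> 'a \<Rightarrow> 'a) \<Rightarrow> 'a set" where
  "derived_algebra sc br = module.span sc {br x y | x y. True}"

definition lie_center :: "('a::zero \<Rightarrow> 'a \<Rightarrow> 'a) \<Rightarrow> 'a set" where
  "lie_center br = {z. \<forall>x. br z x = 0}"

definition CPA_product :: "(complex \<Rightarrow> 'a::ab_group_add \<Rightarrow> 'a) \<Rightarrow> ('a \<Rightarrow> 'a \<Rightarrow> 'a) \<Rightarrow> ('a \<Rightarrow> 'a \<Rightarrow> 'a) \<Rightarrow> bool" where
  "CPA_product sc br p \<longleftrightarrow>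
     bilinear_map sc p \<and>
     (\<forall>x y. p x y = p y x) \<and>
     (\<forall>x y z. p (br x y) z = p x (p y z) - p y (p x z)) \<and>
     (\<forall>x y z. p x (br y z) = br (p x y) z + br y (p x z))"

end

theory Submission
  imports Defs
begin

text \<open>Choose a nonzero central element z and a linear functional \<phi> that vanishes on [g,g]
  but not identically (possible since g is not perfect). Then x \<cdot> y = \<phi>(x) \<phi>(y) z is a
  non-trivial CPA-product: both sides of the two Leibniz-type identities vanish, because
  \<phi> kills brackets, brackets with z vanish, and the products \<phi>(x) \<phi>(y) commute.\<close>

lemma vector_space_field_mult: "vector_space ((*) :: 'f::field \<Rightarrow> 'f \<Rightarrow> 'f)"
  by unfold_locales (auto simp: algebra_simps)

lemma linear_functional_vanishing_on_span:
  fixes sc :: "'f::field \<Rightarrow> 'a::ab_group_add \<Rightarrow> 'a"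
  assumes "vector_space sc" and "x0 \<notin> module.span sc S"
  obtains \<phi> where "Vector_Spaces.linear sc (*) \<phi>" and "\<phi> x0 = 1"
    and "\<And>v. v \<in> module.span sc S \<Longrightarrow> \<phi> v = 0"
proof -
  interpret V: vector_space sc by (rule assms(1))
  interpret P: vector_space_pair sc "(*) :: 'f \<Rightarrow> 'f \<Rightarrow> 'f"
    by (rule vector_space_pair.intro[OF assms(1) vector_space_field_mult])
  obtain B where "B \<subseteq> V.span S" "V.independent B" "V.span S \<subseteq> V.span B"
    using V.maximal_independent_subset by blast
  then have span_B: "V.span B = V.span S"
    by (metis V.span_mono V.span_span subset_antisym)
  have x0_notin: "x0 \<notin> V.span B" "x0 \<notin> B"
    using assms(2) span_B V.span_base by auto
  have indep: "V.independent (insert x0 B)"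
    using V.independent_insertI x0_notin(1) \<open>V.independent B\<close> by blast
  define \<phi> where "\<phi> = P.construct (insert x0 B) (\<lambda>b. if b = x0 then (1::'f) else 0)"
  have lin: "Vector_Spaces.linear sc (*) \<phi>"
    unfolding \<phi>_def by (rule P.linear_construct[OF indep])
  have "\<phi> b = 0" if "b \<in> B" for b
    unfolding \<phi>_def using P.construct_basis[OF indep, of b] that x0_notin(2) by auto
  then have "\<forall>v \<in> V.span B. \<phi> v = 0"
    using P.linear_eq_0_on_span[OF lin] by blast
  moreover have "\<phi> x0 = 1"
    unfolding \<phi>_def using P.construct_basis[OF indep, of x0] by simp
  ultimately show thesis
    using that lin span_B by blast
qed

lemma alternating_bilinear_antisym:
  assumes "bilinear_map sc br" and "\<And>x. br x x = 0"
  shows "br x y = - br y x"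
proof -
  have "br (x + y) (x + y) = (br x x + br y x) + (br x y + br y y)"
    using assms(1) by (simp add: bilinear_map_def)
  then have "br x y + br y x = 0"
    using assms(2) by (simp add: add.commute)
  then show ?thesis
    by (simp add: eq_neg_iff_add_eq_0)
qed

lemma bilinear_map_zero_left:
  assumes "bilinear_map sc m"
  shows "m 0 y = 0"
proof -
  have "m (0 + 0) y = m 0 y + m 0 y"
    using assms unfolding bilinear_map_def by blast
  then show ?thesis by simp
qed

lemma lie_center_bracket_right:
  assumes "complex_lie_algebra sc br" and "z \<in> lie_center br"
  shows "br x z = 0"
  using assms alternating_bilinear_antisym[of sc br x z]
  unfolding complex_lie_algebra_def lie_center_def by simp

lemma CPA_product_functional_square_central:
  fixes sc :: "complex \<Rightarrow> 'a::ab_group_add \<Rightarrow> 'a"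
  assumes "vector_space sc" and "bilinear_map sc br"
    and lin: "Vector_Spaces.linear sc (*) \<phi>"
    and \<phi>_br: "\<And>x y. \<phi> (br x y) = 0"
    and central: "\<And>x. br z x = 0" "\<And>x. br x z = 0"
  shows "CPA_product sc br (\<lambda>x y. sc (\<phi> x * \<phi> y) z)"
proof -
  interpret V: vector_space sc by (rule assms(1))
  have \<phi>_add: "\<phi> (x + y) = \<phi> x + \<phi> y" and \<phi>_scale: "\<phi> (sc c x) = c * \<phi> x" for c x y
    using lin by (simp_all add: Vector_Spaces.linear_def module_hom_def module_hom_axioms_def)
  have br_scale: "br (sc c x) y = sc c (br x y)" "br x (sc c y) = sc c (br x y)" for c x y
    using assms(2) by (simp_all add: bilinear_map_def)
  have "bilinear_map sc (\<lambda>x y. sc (\<phi> x * \<phi> y) z)"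
    unfolding bilinear_map_def
    by (simp add: \<phi>_add \<phi>_scale distrib_left distrib_right mult.assoc mult.left_commute
        V.scale_left_distrib)
  moreover have "sc (\<phi> x * \<phi> y) z = sc (\<phi> y * \<phi> x) z" for x y
    by (simp add: mult.commute)
  moreover have "sc (\<phi> (br x y) * \<phi> w) z
      = sc (\<phi> x * \<phi> (sc (\<phi> y * \<phi> w) z)) z - sc (\<phi> y * \<phi> (sc (\<phi> x * \<phi> w) z)) z" for x y w
    by (simp add: \<phi>_br \<phi>_scale mult.left_commute)
  moreover have "sc (\<phi> x * \<phi> (br y w)) z
      = br (sc (\<phi> x * \<phi> y) z) w + br y (sc (\<phi> x * \<phi> w) z)" for x y w
    by (simp add: \<phi>_br br_scale central)
  ultimately show ?thesis
    unfolding CPA_product_def by blast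
qed

theorem proposition3p8:
  fixes sc :: "complex \<Rightarrow> 'a::ab_group_add \<Rightarrow> 'a"
    and br :: "'a \<Rightarrow> 'a \<Rightarrow> 'a"
  assumes "complex_lie_algebra sc br"
    and "finite_dim sc"
    and "derived_algebra sc br \<noteq> UNIV"
    and "lie_center br \<noteq> {0}"
  shows "\<exists>p. CPA_product sc br p \<and> (\<exists>x y. p x y \<noteq> 0)"
proof -
  have vs: "vector_space sc" and bl: "bilinear_map sc br"
    using assms(1) unfolding complex_lie_algebra_def by simp_all
  interpret V: vector_space sc by (rule vs)
  obtain z where "z \<noteq> 0" and "z \<in> lie_center br"
    using assms(4) bilinear_map_zero_left[OF bl] unfolding lie_center_def by blast
  then have z_left: "br z x = 0" and z_right: "br x z = 0" for x
    using lie_center_bracket_right[OF assms(1)] unfolding lie_center_def by blast+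
  obtain x0 where "x0 \<notin> V.span {br x y | x y. True}"
    using assms(3) unfolding derived_algebra_def by auto
  then obtain \<phi> where lin: "Vector_Spaces.linear sc (*) \<phi>" and "\<phi> x0 = 1"
    and \<phi>_span: "\<And>v. v \<in> V.span {br x y | x y. True} \<Longrightarrow> \<phi> v = 0"
    using linear_functional_vanishing_on_span[OF vs] by blast
  have \<phi>_br: "\<phi> (br x y) = 0" for x y
    by (rule \<phi>_span) (auto intro: V.span_base)
  have "CPA_product sc br (\<lambda>x y. sc (\<phi> x * \<phi> y) z)"
    using CPA_product_functional_square_central[OF vs bl lin \<phi>_br z_left z_right] .
  moreover have "sc (\<phi> x0 * \<phi> x0) z \<noteq> 0"
    using \<open>\<phi> x0 = 1\<close> \<open>z \<noteq> 0\<close> by simp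
  ultimately show ?thesis by blast
qed

end
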